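(* Let $f:[0,1]\times\mathbb{R}\to\mathbb{R}$ satisfy: (C(c)) $f$ is continuous on $[0,1]\times\mathbb{R}$ and has a continuous partial derivative $f_x$ with respect to the second variable; (D(f)) there exist positive constants $A,B$ with $A<1$ such that $|f(t,x)|\leqslant A|x|+B$ for all $t\in[0,1]$, $x\in\mathbb{R}$; (D($f_x$)) $\inf_{[0,1]\times\mathbb{R}} f_x>-1$; and let (D(v)) $v:[0,1]\to\mathbb{R}$ be continuous. Let $x^\star$ be the unique solution in $H^2(0,1)\cap H^1_0(0,1)$ of $\ddot{x}(t)=f(t,x(t))+v(t)$, $x(0)=x(1)=0$, and for each $N\in\mathbb{N}$, $N\geqslant2$, let $x_N:\{0,\dots,N\}\to\mathbb{R}$ be the unique solution of $$\Delta^2x(k-1)=\tfrac{1}{N^2}f\left(\tfrac{k}{N},x(k)\right)+\tfrac{1}{N^2}v\left(\tfrac{k}{N}\right),\ k=1,\dots,N-1,\qquad x(0)=x(N)=0.$$ Then $\lim_{N\to\infty}\max_{k\in\{0,\dots,N\}}\left|x^\star\left(\tfrac{k}{N}\right)-x_N(k)\right|=0$.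
   Context: $\Delta x(k-1)=x(k)-x(k-1)$, $\Delta^2x(k-1)=x(k+1)-2x(k)+x(k-1)$. $H^1_0(0,1)$: absolutely continuous functions on $[0,1]$ vanishing at $0$ and $1$ with derivative in $L^2$; $H^2(0,1)$: functions in $H^1(0,1)$ whose derivative is in $H^1(0,1)$. *)

theory Defs
  imports "HOL-Analysis.Analysis"
begin

text \<open>g is an L^2(0,1) weak derivative of x on [0,1]: x is absolutely continuous on [0,1]
  with x(t) = x(0) + int_0^t g, and g is square integrable on [0,1].\<close>
definition has_L2_weak_deriv :: "(real \<Rightarrow> real) \<Rightarrow> (real \<Rightarrow> real) \<Rightarrow> bool" where
  "has_L2_weak_deriv x g \<longleftrightarrow>
     integrable (lebesgue_on {0..1}) g \<and>
     integrable (lebesgue_on {0..1}) (\<lambda>t. (g t)\<^sup>2) \<and>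
     (\<forall>t\<in>{0..1}. x t = x 0 + (LINT s|lebesgue_on {0..t}. g s))"

definition H1 :: "(real \<Rightarrow> real) \<Rightarrow> bool" where
  "H1 x \<longleftrightarrow> (\<exists>g. has_L2_weak_deriv x g)"

definition H1_0 :: "(real \<Rightarrow> real) \<Rightarrow> bool" where
  "H1_0 x \<longleftrightarrow> H1 x \<and> x 0 = 0 \<and> x 1 = 0"

definition is_H2_solution :: "(real \<Rightarrow> real \<Rightarrow> real) \<Rightarrow> (real \<Rightarrow> real) \<Rightarrow> (real \<Rightarrow> real) \<Rightarrow> bool" where
  "is_H2_solution f v x \<longleftrightarrow> H1_0 x \<and>
     (\<exists>y g. has_L2_weak_deriv x y \<and> has_L2_weak_deriv y g \<and>
        (AE t in lebesgue_on {0..1}. g t = f t (x t) + v t))"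

end

theory Submission
  imports Defs
begin

text \<open>Since \<open>x\<^sup>\<star>'' = f(t, x\<^sup>\<star>) + v\<close> is continuous, Taylor's formula shows that the grid values of
  \<open>x\<^sup>\<star>\<close> satisfy the difference scheme up to a truncation error \<open>o(1/N\<^sup>2)\<close>, uniformly in \<open>k\<close>.
  The error \<open>e\<^sub>k = x\<^sup>\<star>(k/N) - x\<^sub>N(k)\<close> therefore solves
  \<open>\<Delta>\<^sup>2e(k-1) = (f(k/N, x\<^sup>\<star>) - f(k/N, x\<^sub>N))/N\<^sup>2 + r\<^sub>k\<close>. Multiplying by \<open>e\<^sub>k\<close> and summing by parts
  gives \<open>-\<Sum>(\<Delta>e)\<^sup>2\<close> on the left; the bound \<open>f\<^sub>x \<ge> -a > -1\<close> makes \<open>f\<close> one-sided Lipschitz, and the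
  discrete Poincare inequality \<open>max |e|\<^sup>2 \<le> N \<Sum>(\<Delta>e)\<^sup>2\<close> yields
  \<open>(1 - a) max |e| \<le> N\<^sup>2 max |r| \<longrightarrow> 0\<close>.\<close>

lemma has_L2_weak_deriv_integral:
  assumes "has_L2_weak_deriv x y"
  shows "y integrable_on {0..1}" and "\<And>t. t \<in> {0..1} \<Longrightarrow> x t = x 0 + integral {0..t} y"
proof -
  have int: "integrable (lebesgue_on {0..1}) y"
    and eq: "\<And>t. t \<in> {0..1} \<Longrightarrow> x t = x 0 + (LINT s|lebesgue_on {0..t}. y s)"
    using assms unfolding has_L2_weak_deriv_def by blast+
  show "y integrable_on {0..1}"
    using integrable_on_lebesgue_on[OF int] by simp
  fix t :: real assume t: "t \<in> {0..1}"
  have "integrable (lebesgue_on {0..t}) y"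
    by (rule integrable_subinterval[OF int]) (use t in auto)
  then have "(LINT s|lebesgue_on {0..t}. y s) = integral {0..t} y"
    by (rule lebesgue_integral_eq_integral) simp
  then show "x t = x 0 + integral {0..t} y" using eq[OF t] by simp
qed

lemma continuous_on_indefinite_integral_eq:
  fixes x y :: "real \<Rightarrow> real"
  assumes "y integrable_on {a..b}" and "\<And>t. t \<in> {a..b} \<Longrightarrow> x t = x a + integral {a..t} y"
  shows "continuous_on {a..b} x"
proof -
  have "continuous_on {a..b} (\<lambda>t. x a + integral {a..t} y)"
    using indefinite_integral_continuous_1[OF assms(1)] by (intro continuous_intros)
  then show ?thesis by (rule continuous_on_eq) (use assms(2) in metis)
qed

lemma has_real_derivative_indefinite_integral_eq:
  fixes x y :: "real \<Rightarrow> real"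
  assumes "continuous_on {a..b} y" and "\<And>t. t \<in> {a..b} \<Longrightarrow> x t = x a + integral {a..t} y"
    and t: "t \<in> {a<..<b}"
  shows "(x has_real_derivative y t) (at t)"
proof -
  have "((\<lambda>u. x a + integral {a..u} y) has_real_derivative y t) (at t within {a..b})"
    using integral_has_real_derivative[OF assms(1), of t] t
    by (auto intro!: derivative_eq_intros)
  then have "((\<lambda>u. x a + integral {a..u} y) has_real_derivative y t) (at t)"
    using at_within_Icc_at[of a t b] t by simp
  then show ?thesis
  proof (rule has_field_derivative_transform_within_open[where S = "{a<..<b}"])
    show "x a + integral {a..u} y = x u" if "u \<in> {a<..<b}" for u
      using assms(2) that by (metis greaterThanLessThan_iff atLeastAtMost_iff less_imp_le)
  qed (use t in auto)
qed

lemma continuous_on_superposition: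
  fixes f :: "real \<Rightarrow> real \<Rightarrow> real"
  assumes "continuous_on ({0..1} \<times> UNIV) (\<lambda>(t, x). f t x)" and "continuous_on {0..1} x"
  shows "continuous_on {0..1} (\<lambda>t. f t (x t))"
proof -
  have "continuous_on {0..1} (\<lambda>t. (t, x t))" using assms(2) by (intro continuous_intros)
  moreover have "(\<lambda>t. (t, x t)) ` {0..1} \<subseteq> {0..1} \<times> UNIV" by auto
  ultimately have "continuous_on {0..1} ((\<lambda>(t, x). f t x) \<circ> (\<lambda>t. (t, x t)))"
    using continuous_on_compose continuous_on_subset[OF assms(1)] by blast
  then show ?thesis by (simp add: o_def)
qed

lemma is_H2_solution_classical:
  fixes f :: "real \<Rightarrow> real \<Rightarrow> real"
  assumes sol: "is_H2_solution f v x"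
    and Cf: "continuous_on ({0..1} \<times> UNIV) (\<lambda>(t, x). f t x)" and Cv: "continuous_on {0..1} v"
  obtains y where "continuous_on {0..1} x" and "continuous_on {0..1} y"
    and "\<And>t. t \<in> {0<..<1} \<Longrightarrow> (x has_real_derivative y t) (at t)"
    and "\<And>t. t \<in> {0<..<1} \<Longrightarrow> (y has_real_derivative f t (x t) + v t) (at t)"
proof -
  obtain y g where xy: "has_L2_weak_deriv x y" and yg: "has_L2_weak_deriv y g"
    and ae: "AE t in lebesgue_on {0..1}. g t = f t (x t) + v t"
    using sol unfolding is_H2_solution_def by blast
  note X = has_L2_weak_deriv_integral[OF xy] and Y = has_L2_weak_deriv_integral[OF yg]
  define h where "h t = f t (x t) + v t" for t
  have cx: "continuous_on {0..1} x" using continuous_on_indefinite_integral_eq[OF X] .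
  have cy: "continuous_on {0..1} y" using continuous_on_indefinite_integral_eq[OF Y] .
  have ch: "continuous_on {0..1} h"
    unfolding h_def using continuous_on_superposition[OF Cf cx] Cv by (intro continuous_intros)
  have "AE t in lebesgue. t \<in> {0..1} \<longrightarrow> g t = h t"
    using ae unfolding h_def by (subst (asm) AE_restrict_space_iff) auto
  then obtain Z where Z: "Z \<in> null_sets lebesgue" "\<And>t. t \<in> {0..1} - Z \<Longrightarrow> g t = h t"
    by (rule AE_E3) auto
  have Yh: "y t = y 0 + integral {0..t} h" if t: "t \<in> {0..1}" for t
  proof -
    have "integral {0..t} g = integral {0..t} h"
      proof (rule integral_spike[where S = Z])
      show "negligible Z" using Z(1) negligible_iff_null_sets by blast
    qed (use Z(2) t in auto)
    then show ?thesis using Y(2)[OF t] by simp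
  qed
  show ?thesis
  proof (rule that[OF cx cy])
    show "(x has_real_derivative y t) (at t)" if "t \<in> {0<..<1}" for t
      using has_real_derivative_indefinite_integral_eq[OF cy X(2) that] .
    show "(y has_real_derivative f t (x t) + v t) (at t)" if "t \<in> {0<..<1}" for t
      using has_real_derivative_indefinite_integral_eq[OF ch Yh that] unfolding h_def .
  qed
qed

lemma abs_diff_le_of_deriv_bound:
  fixes F F' :: "real \<Rightarrow> real"
  assumes "a < b" and "continuous_on {a..b} F"
    and "\<And>u. u \<in> {a<..<b} \<Longrightarrow> (F has_real_derivative F' u) (at u)"
    and "\<And>u. u \<in> {a<..<b} \<Longrightarrow> \<bar>F' u\<bar> \<le> B"
  shows "\<bar>F b - F a\<bar> \<le> B * (b - a)"
proof -
  obtain l z where z: "a < z" "z < b" "(F has_real_derivative l) (at z)" "F b - F a = (b - a) * l"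
    using MVT[OF assms(1,2)] assms(3) real_differentiable_def by (meson greaterThanLessThan_iff)
  have "l = F' z" using DERIV_unique[OF z(3) assms(3)] z by simp
  then have "\<bar>l\<bar> \<le> B" using assms(4) z by simp
  then show ?thesis using z(4) assms(1) by (simp add: abs_mult mult.commute mult_right_mono)
qed

lemma central_second_difference_error:
  fixes x y h :: "real \<Rightarrow> real"
  assumes d: "0 < d"
    and cx: "continuous_on {t - d..t + d} x" and cy: "continuous_on {t - d..t + d} y"
    and x': "\<And>u. \<bar>u - t\<bar> < d \<Longrightarrow> (x has_real_derivative y u) (at u)"
    and y': "\<And>u. \<bar>u - t\<bar> < d \<Longrightarrow> (y has_real_derivative h u) (at u)"
    and osc: "\<And>u. \<bar>u - t\<bar> < d \<Longrightarrow> \<bar>h u - h t\<bar> \<le> e"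
  shows "\<bar>x (t + d) - 2 * x t + x (t - d) - d\<^sup>2 * h t\<bar> \<le> 2 * e * d\<^sup>2"
proof -
  have e: "0 \<le> e" using osc[of t] d by simp
  have shifted_deriv:
    "((\<lambda>s. g (t + s)) has_real_derivative g' (t + s)) (at s)"
    "((\<lambda>s. g (t - s)) has_real_derivative - g' (t - s)) (at s)"
    if g': "\<And>u. \<bar>u - t\<bar> < d \<Longrightarrow> (g has_real_derivative g' u) (at u)" and s: "0 < s" "s < d"
    for g g' :: "real \<Rightarrow> real" and s
  proof -
    have "((\<lambda>s. g (t + s)) has_real_derivative g' (t + s) * 1) (at s)"
      by (rule DERIV_chain2[OF g']) (use s in \<open>auto intro!: derivative_eq_intros\<close>)
    then show "((\<lambda>s. g (t + s)) has_real_derivative g' (t + s)) (at s)" by simp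
    have "((\<lambda>s. g (t - s)) has_real_derivative g' (t - s) * (-1)) (at s)"
      by (rule DERIV_chain2[OF g']) (use s in \<open>auto intro!: derivative_eq_intros\<close>)
    then show "((\<lambda>s. g (t - s)) has_real_derivative - g' (t - s)) (at s)" by simp
  qed
  have shifted_cont: "continuous_on {0..s} (\<lambda>s. g (t + s))" "continuous_on {0..s} (\<lambda>s. g (t - s))"
    if "continuous_on {t - d..t + d} g" "s \<le> d" for g :: "real \<Rightarrow> real" and s
    by (rule continuous_on_compose2[OF that(1)], use that in \<open>auto intro!: continuous_intros\<close>)+
  \<comment> \<open>\<open>q(s) = x(t+s) + x(t-s) - 2x(t) - s\<^sup>2h(t)\<close> has \<open>q(0) = q'(0) = 0\<close> and \<open>|q''| \<le> 2e\<close>.\<close>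
  define q' where "q' s = y (t + s) - y (t - s) - 2 * s * h t" for s
  define q where "q s = x (t + s) + x (t - s) - 2 * x t - s\<^sup>2 * h t" for s
  have q'_bound: "\<bar>q' s\<bar> \<le> 2 * e * d" if s: "0 < s" "s \<le> d" for s
  proof -
    have "\<bar>q' s - q' 0\<bar> \<le> 2 * e * (s - 0)"
    proof (rule abs_diff_le_of_deriv_bound[where F' = "\<lambda>u. h (t + u) + h (t - u) - 2 * h t"])
      show "continuous_on {0..s} q'"
        unfolding q'_def using shifted_cont[OF cy s(2)] by (intro continuous_intros) auto
      fix u assume "u \<in> {0<..<s}"
      then have u: "0 < u" "u < d" using s by auto
      show "(q' has_real_derivative h (t + u) + h (t - u) - 2 * h t) (at u)"
        unfolding q'_def using shifted_deriv[OF y' u] by (auto intro!: derivative_eq_intros)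
      have "\<bar>h (t + u) - h t\<bar> \<le> e" "\<bar>h (t - u) - h t\<bar> \<le> e" using osc u by auto
      then show "\<bar>h (t + u) + h (t - u) - 2 * h t\<bar> \<le> 2 * e" by linarith
    qed (use s in auto)
    also have "\<dots> \<le> 2 * e * d" using e s by (simp add: mult_left_mono)
    finally show ?thesis unfolding q'_def by simp
  qed
  have "\<bar>q d - q 0\<bar> \<le> 2 * e * d * (d - 0)"
  proof (rule abs_diff_le_of_deriv_bound[where F' = q'])
    show "continuous_on {0..d} q"
      unfolding q_def using shifted_cont[OF cx order_refl] by (intro continuous_intros) auto
    fix u assume "u \<in> {0<..<d}"
    then have u: "0 < u" "u < d" by auto
    show "(q has_real_derivative q' u) (at u)"
      unfolding q_def q'_def using shifted_deriv[OF x' u] by (auto intro!: derivative_eq_intros)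
    show "\<bar>q' u\<bar> \<le> 2 * e * d" using q'_bound u by simp
  qed (use d in auto)
  then show ?thesis unfolding q_def by (simp add: power2_eq_square algebra_simps)
qed

lemma sum_mult_second_difference:
  fixes e :: "nat \<Rightarrow> real"
  shows "(\<Sum>k=1..n. e k * (e (k+1) - 2 * e k + e (k-1))) =
     e n * (e (Suc n) - e n) - e 0 * (e 1 - e 0) - (\<Sum>j<n. (e (Suc j) - e j)\<^sup>2)"
proof (induction n)
  case (Suc n)
  then show ?case by (simp add: power2_eq_square algebra_simps)
qed simp

lemma sum_mult_second_difference_Dirichlet:
  fixes e :: "nat \<Rightarrow> real"
  assumes "e 0 = 0" and "e N = 0"
  shows "(\<Sum>k=1..N-1. e k * (e (k+1) - 2 * e k + e (k-1))) = - (\<Sum>j<N. (e (Suc j) - e j)\<^sup>2)"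
proof (cases N)
  case (Suc n)
  then show ?thesis using sum_mult_second_difference[of e n] assms by (simp add: power2_eq_square)
qed simp

lemma discrete_Poincare:
  fixes e :: "nat \<Rightarrow> real"
  assumes "e 0 = 0" and "k \<le> N"
  shows "(e k)\<^sup>2 \<le> real N * (\<Sum>j<N. (e (Suc j) - e j)\<^sup>2)"
proof -
  have "e k = (\<Sum>j<k. 1 * (e (Suc j) - e j))" using sum_lessThan_telescope[of e k] assms(1) by simp
  then have "(e k)\<^sup>2 \<le> (\<Sum>j<k. 1\<^sup>2) * (\<Sum>j<k. (e (Suc j) - e j)\<^sup>2)"
    using Cauchy_Schwarz_ineq_sum[of "\<lambda>_. 1" "\<lambda>j. e (Suc j) - e j" "{..<k}"] by simp
  also have "\<dots> \<le> real N * (\<Sum>j<N. (e (Suc j) - e j)\<^sup>2)"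
    using assms(2) by (intro mult_mono sum_mono2 sum_nonneg) auto
  finally show ?thesis .
qed

lemma discrete_energy_estimate:
  fixes e D r :: "nat \<Rightarrow> real"
  assumes N: "0 < N" and e0: "e 0 = 0" and eN: "e N = 0" and a: "0 \<le> a" "a < 1" and E: "0 \<le> E"
    and scheme: "\<And>k. k \<in> {1..N-1} \<Longrightarrow> e (k+1) - 2 * e k + e (k-1) = D k / (real N)\<^sup>2 + r k"
    and onesided: "\<And>k. k \<in> {1..N-1} \<Longrightarrow> e k * D k \<ge> - a * (e k)\<^sup>2"
    and truncation: "\<And>k. k \<in> {1..N-1} \<Longrightarrow> \<bar>r k\<bar> \<le> E / (real N)\<^sup>2"
    and k: "k \<le> N"
  shows "\<bar>e k\<bar> \<le> E / (1 - a)"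
proof -
  define S where "S = (\<Sum>j<N. (e (Suc j) - e j)\<^sup>2)"
  define M where "M = Max ((\<lambda>k. \<bar>e k\<bar>) ` {..N})"
  have le_M: "\<bar>e k\<bar> \<le> M" if "k \<le> N" for k unfolding M_def using that by (intro Max_ge) auto
  have "M \<in> (\<lambda>k. \<bar>e k\<bar>) ` {..N}" unfolding M_def by (intro Max_in) auto
  then obtain k0 where k0: "k0 \<le> N" "\<bar>e k0\<bar> = M" by auto
  have M: "0 \<le> M" using k0 by auto
  define X where "X = a * M\<^sup>2 + M * E"
  have term_bound: "e k * (D k / (real N)\<^sup>2 + r k) \<ge> - (X / (real N)\<^sup>2)" if k: "k \<in> {1..N-1}" for k
  proof -
    have "\<bar>e k\<bar> \<le> M" using le_M k by auto
    then have "(e k)\<^sup>2 \<le> M\<^sup>2" by (metis abs_le_square_iff abs_of_nonneg M)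
    then have "a * (e k)\<^sup>2 \<le> a * M\<^sup>2" using a(1) by (simp add: mult_left_mono)
    then have "e k * D k \<ge> - (a * M\<^sup>2)" using onesided[OF k] by linarith
    then have "e k * D k / (real N)\<^sup>2 \<ge> - (a * M\<^sup>2) / (real N)\<^sup>2"
      by (rule divide_right_mono) simp
    moreover have "\<bar>e k * r k\<bar> \<le> M * (E / (real N)\<^sup>2)"
      unfolding abs_mult using \<open>\<bar>e k\<bar> \<le> M\<close> truncation[OF k] M by (intro mult_mono) auto
    ultimately show ?thesis
      unfolding X_def by (simp add: distrib_left add_divide_distrib abs_le_iff)
  qed
  have "- (X / real N) \<le> - (real (N - 1) * (X / (real N)\<^sup>2))"
    using N a M E unfolding X_def by (simp add: power2_eq_square field_simps)
  also have "\<dots> = (\<Sum>k=1..N-1. - (X / (real N)\<^sup>2))" by simp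
  also have "\<dots> \<le> (\<Sum>k=1..N-1. e k * (D k / (real N)\<^sup>2 + r k))"
    by (rule sum_mono) (rule term_bound)
  also have "\<dots> = - S"
    unfolding S_def sum_mult_second_difference_Dirichlet[OF e0 eN, symmetric] using scheme by simp
  finally have "real N * S \<le> X" using N by (simp add: field_simps)
  moreover have "M\<^sup>2 \<le> real N * S"
    using discrete_Poincare[of e k0 N] e0 k0 unfolding S_def by (metis power2_abs)
  ultimately have "(1 - a) * M * M \<le> E * M" unfolding X_def by (simp add: algebra_simps power2_eq_square)
  then have "(1 - a) * M \<le> E"
    using E M by (cases "M = 0") (auto intro: mult_right_le_imp_le)
  then have "M \<le> E / (1 - a)" using a by (simp add: field_simps)
  then show ?thesis using le_M[OF k] by linarith
qed

lemma deriv_ge_imp_diff_mult_ge: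
  fixes F F' :: "real \<Rightarrow> real"
  assumes F': "\<And>x. (F has_real_derivative F' x) (at x)" and c: "\<And>x. F' x \<ge> c"
  shows "(p - q) * (F p - F q) \<ge> c * (p - q)\<^sup>2"
proof -
  have increment: "F v - F u \<ge> c * (v - u)" if "u \<le> v" for u v
  proof -
    have "F u - c * u \<le> F v - c * v"
    proof (rule DERIV_nonneg_imp_nondecreasing[OF that])
      show "\<exists>y. ((\<lambda>x. F x - c * x) has_real_derivative y) (at x) \<and> y \<ge> 0" for x
        using F' c by (intro exI[of _ "F' x - c"]) (auto intro!: derivative_eq_intros)
    qed
    then show ?thesis by (simp add: algebra_simps)
  qed
  show ?thesis
  proof (cases "q \<le> p")
    case True
    then have "(p - q) * (c * (p - q)) \<le> (p - q) * (F p - F q)"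
      using increment by (intro mult_left_mono) auto
    then show ?thesis by (simp add: power2_eq_square mult_ac)
  next
    case False
    then have "(q - p) * (c * (q - p)) \<le> (q - p) * (F q - F p)"
      using increment by (intro mult_left_mono) auto
    then show ?thesis by (simp add: power2_eq_square algebra_simps)
  qed
qed

lemma grid_truncation_error:
  fixes x y h :: "real \<Rightarrow> real"
  assumes cx: "continuous_on {0..1} x" and cy: "continuous_on {0..1} y"
    and x': "\<And>t. t \<in> {0<..<1} \<Longrightarrow> (x has_real_derivative y t) (at t)"
    and y': "\<And>t. t \<in> {0<..<1} \<Longrightarrow> (y has_real_derivative h t) (at t)"
    and osc: "\<And>t u. t \<in> {0..1} \<Longrightarrow> u \<in> {0..1} \<Longrightarrow> \<bar>u - t\<bar> < 1 / real N \<Longrightarrow> \<bar>h u - h t\<bar> \<le> \<eta>"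
    and k: "k \<in> {1..N-1}"
  shows "\<bar>x (real (k+1) / real N) - 2 * x (real k / real N) + x (real (k-1) / real N)
           - h (real k / real N) / (real N)\<^sup>2\<bar> \<le> 2 * \<eta> / (real N)\<^sup>2"
proof -
  define t where "t = real k / real N"
  define d where "d = 1 / real N"
  have kN: "1 \<le> real k" "real k + 1 \<le> real N" using k by auto
  then have t: "0 \<le> t - d" "t + d \<le> 1" "0 < d" unfolding t_def d_def by (auto simp: field_simps)
  have grid: "real (k+1) / real N = t + d" "real (k-1) / real N = t - d"
    unfolding t_def d_def using kN by (simp_all add: add_divide_distrib of_nat_diff diff_divide_distrib)
  have interior: "u \<in> {0<..<1}" if "\<bar>u - t\<bar> < d" for u using that t by auto
  have "\<bar>x (t + d) - 2 * x t + x (t - d) - d\<^sup>2 * h t\<bar> \<le> 2 * \<eta> * d\<^sup>2"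
  proof (rule central_second_difference_error)
    show "continuous_on {t - d..t + d} x" "continuous_on {t - d..t + d} y"
      using continuous_on_subset[OF cx] continuous_on_subset[OF cy] t by auto
    show "\<bar>h u - h t\<bar> \<le> \<eta>" if "\<bar>u - t\<bar> < d" for u
      using osc[of t u] interior[OF that] that t unfolding d_def by auto
  qed (use t x' y' interior in auto)
  then show ?thesis unfolding grid t_def[symmetric] d_def by (simp add: power_divide)
qed

lemma finite_difference_error_bound:
  fixes f :: "real \<Rightarrow> real \<Rightarrow> real" and v x y :: "real \<Rightarrow> real" and z :: "nat \<Rightarrow> real"
  assumes N: "0 < N"
    and cx: "continuous_on {0..1} x" and cy: "continuous_on {0..1} y"
    and x': "\<And>t. t \<in> {0<..<1} \<Longrightarrow> (x has_real_derivative y t) (at t)"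
    and y': "\<And>t. t \<in> {0<..<1} \<Longrightarrow> (y has_real_derivative f t (x t) + v t) (at t)"
    and x0: "x 0 = 0" and x1: "x 1 = 0"
    and onesided: "\<And>t p q. t \<in> {0..1} \<Longrightarrow> (p - q) * (f t p - f t q) \<ge> - a * (p - q)\<^sup>2"
    and a: "0 \<le> a" "a < 1"
    and osc: "\<And>t u. t \<in> {0..1} \<Longrightarrow> u \<in> {0..1} \<Longrightarrow> \<bar>u - t\<bar> < 1 / real N \<Longrightarrow>
                \<bar>f u (x u) + v u - (f t (x t) + v t)\<bar> \<le> \<eta>"
    and z0: "z 0 = 0" and zN: "z N = 0"
    and scheme: "\<And>k. k \<in> {1..N-1} \<Longrightarrow> z (k+1) - 2 * z k + z (k-1) =
                   1 / real N ^ 2 * f (real k / real N) (z k) + 1 / real N ^ 2 * v (real k / real N)"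
    and k: "k \<le> N"
  shows "\<bar>x (real k / real N) - z k\<bar> \<le> 2 * \<eta> / (1 - a)"
proof -
  define h where "h t = f t (x t) + v t" for t
  define e where "e k = x (real k / real N) - z k" for k
  define D where "D k = f (real k / real N) (x (real k / real N)) - f (real k / real N) (z k)" for k
  define r where "r k = x (real (k+1) / real N) - 2 * x (real k / real N) + x (real (k-1) / real N)
    - h (real k / real N) / (real N)\<^sup>2" for k
  have "0 \<le> \<eta>" using osc[of 0 0] N by simp
  have "\<bar>e k\<bar> \<le> 2 * \<eta> / (1 - a)"
  proof (rule discrete_energy_estimate[where D = D and r = r, OF N _ _ a _ _ _ _ k])
    show "e 0 = 0" "e N = 0" unfolding e_def using x0 x1 z0 zN N by simp_all
    fix k assume k: "k \<in> {1..N-1}"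
    have "D k / (real N)\<^sup>2 + r k = x (real (k+1) / real N) - 2 * x (real k / real N) + x (real (k-1) / real N)
        - (1 / real N ^ 2 * f (real k / real N) (z k) + 1 / real N ^ 2 * v (real k / real N))"
      unfolding D_def r_def h_def by (simp add: power_one_over diff_divide_distrib add_divide_distrib)
    then show "e (k+1) - 2 * e k + e (k-1) = D k / (real N)\<^sup>2 + r k"
      using scheme[OF k] unfolding e_def by argo
    have "real k / real N \<in> {0..1}" using k by auto
    then show "e k * D k \<ge> - a * (e k)\<^sup>2" unfolding e_def D_def by (rule onesided)
    show "\<bar>r k\<bar> \<le> 2 * \<eta> / (real N)\<^sup>2"
      unfolding r_def
      by (rule grid_truncation_error[where h = h, OF cx cy x' _ _ k]) (use y' osc in \<open>auto simp: h_def\<close>)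
  qed (use \<open>0 \<le> \<eta>\<close> in simp)
  then show ?thesis unfolding e_def .
qed

lemma uniformly_continuous_on_eventually_mesh:
  fixes h :: "real \<Rightarrow> real"
  assumes "uniformly_continuous_on S h" and "0 < \<eta>"
  shows "eventually (\<lambda>N. \<forall>t\<in>S. \<forall>u\<in>S. \<bar>u - t\<bar> < 1 / real N \<longrightarrow> \<bar>h u - h t\<bar> \<le> \<eta>) sequentially"
proof -
  obtain \<delta> where "0 < \<delta>" and \<delta>: "\<forall>t\<in>S. \<forall>u\<in>S. dist u t < \<delta> \<longrightarrow> dist (h u) (h t) < \<eta>"
    using assms unfolding uniformly_continuous_on_def by metis
  have "eventually (\<lambda>N. 1 / real N < \<delta>) sequentially"
    using order_tendstoD(2)[OF lim_1_over_n \<open>0 < \<delta>\<close>] .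
  then show ?thesis
  proof eventually_elim
    case (elim N)
    then show ?case using \<delta> unfolding dist_real_def by force
  qed
qed

lemma Max_abs_tendsto_zeroI:
  fixes e :: "nat \<Rightarrow> nat \<Rightarrow> real"
  assumes "\<And>\<epsilon>. 0 < \<epsilon> \<Longrightarrow> eventually (\<lambda>N. \<forall>k\<le>N. \<bar>e N k\<bar> \<le> \<epsilon>) sequentially"
  shows "(\<lambda>N. Max ((\<lambda>k. \<bar>e N k\<bar>) ` {0..N})) \<longlonglongrightarrow> 0"
proof (rule order_tendstoI)
  show "eventually (\<lambda>N. c < Max ((\<lambda>k. \<bar>e N k\<bar>) ` {0..N})) sequentially" if "c < 0" for c
  proof (rule always_eventually, rule allI)
    fix N
    have "\<bar>e N 0\<bar> \<le> Max ((\<lambda>k. \<bar>e N k\<bar>) ` {0..N})" by (rule Max_ge) auto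
    then show "c < Max ((\<lambda>k. \<bar>e N k\<bar>) ` {0..N})" using that by linarith
  qed
  show "eventually (\<lambda>N. Max ((\<lambda>k. \<bar>e N k\<bar>) ` {0..N}) < c) sequentially" if "0 < c" for c
  proof -
    have "eventually (\<lambda>N. \<forall>k\<le>N. \<bar>e N k\<bar> \<le> c / 2) sequentially" using that by (intro assms) simp
    then show ?thesis
    proof eventually_elim
      case (elim N)
      then have "Max ((\<lambda>k. \<bar>e N k\<bar>) ` {0..N}) \<le> c / 2" by (intro Max.boundedI) auto
      then show ?case using \<open>0 < c\<close> by linarith
    qed
  qed
qed

lemma finite_difference_convergence:
  fixes f :: "real \<Rightarrow> real \<Rightarrow> real" and v x y :: "real \<Rightarrow> real" and z :: "nat \<Rightarrow> nat \<Rightarrow> real"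
  assumes cx: "continuous_on {0..1} x" and cy: "continuous_on {0..1} y"
    and x': "\<And>t. t \<in> {0<..<1} \<Longrightarrow> (x has_real_derivative y t) (at t)"
    and y': "\<And>t. t \<in> {0<..<1} \<Longrightarrow> (y has_real_derivative f t (x t) + v t) (at t)"
    and ch: "continuous_on {0..1} (\<lambda>t. f t (x t) + v t)"
    and x0: "x 0 = 0" and x1: "x 1 = 0"
    and onesided: "\<And>t p q. t \<in> {0..1} \<Longrightarrow> (p - q) * (f t p - f t q) \<ge> - a * (p - q)\<^sup>2"
    and a: "0 \<le> a" "a < 1"
    and scheme: "\<And>N. 2 \<le> N \<Longrightarrow> z N 0 = 0 \<and> z N N = 0 \<and>
        (\<forall>k\<in>{1..N-1}. z N (k+1) - 2 * z N k + z N (k-1) =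
           1 / real N ^ 2 * f (real k / real N) (z N k) + 1 / real N ^ 2 * v (real k / real N))"
  shows "(\<lambda>N. Max ((\<lambda>k. \<bar>x (real k / real N) - z N k\<bar>) ` {0..N})) \<longlonglongrightarrow> 0"
proof (rule Max_abs_tendsto_zeroI)
  fix \<epsilon> :: real assume "0 < \<epsilon>"
  then have "0 < \<epsilon> * (1 - a) / 2" using a by simp
  then have "eventually (\<lambda>N. \<forall>t\<in>{0..1}. \<forall>u\<in>{0..1}. \<bar>u - t\<bar> < 1 / real N \<longrightarrow>
      \<bar>f u (x u) + v u - (f t (x t) + v t)\<bar> \<le> \<epsilon> * (1 - a) / 2) sequentially"
    by (intro uniformly_continuous_on_eventually_mesh compact_uniformly_continuous ch) simp
  moreover have "eventually (\<lambda>N. 2 \<le> N) sequentially" by (rule eventually_ge_at_top)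
  ultimately show "eventually (\<lambda>N. \<forall>k\<le>N. \<bar>x (real k / real N) - z N k\<bar> \<le> \<epsilon>) sequentially"
  proof eventually_elim
    case (elim N)
    have "\<bar>x (real k / real N) - z N k\<bar> \<le> 2 * (\<epsilon> * (1 - a) / 2) / (1 - a)" if "k \<le> N" for k
      by (rule finite_difference_error_bound[OF _ cx cy x' y' x0 x1 onesided a _ _ _ _ that])
        (use elim scheme[OF elim(2)] in auto)
    then show ?case using a by simp
  qed
qed

theorem theorem7:
  fixes f fx :: "real \<Rightarrow> real \<Rightarrow> real" and v :: "real \<Rightarrow> real"
    and xstar :: "real \<Rightarrow> real" and xN :: "nat \<Rightarrow> nat \<Rightarrow> real"
  assumes Cf: "continuous_on ({0..1} \<times> UNIV) (\<lambda>(t, x). f t x)"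
    and Cfx: "continuous_on ({0..1} \<times> UNIV) (\<lambda>(t, x). fx t x)"
    and fx_deriv: "\<forall>t\<in>{0..1}. \<forall>x. (f t has_real_derivative fx t x) (at x)"
    and Df: "\<exists>A B. 0 < A \<and> A < 1 \<and> 0 < B \<and> (\<forall>t\<in>{0..1}. \<forall>x. \<bar>f t x\<bar> \<le> A * \<bar>x\<bar> + B)"
    and Dfx: "\<exists>c. c > -1 \<and> (\<forall>t\<in>{0..1}. \<forall>x. fx t x \<ge> c)"
    and Dv: "continuous_on {0..1} v"
    and xstar_sol: "is_H2_solution f v xstar"
    and xstar_unique: "\<forall>z. is_H2_solution f v z \<longrightarrow> (\<forall>t\<in>{0..1}. z t = xstar t)"
    and xN_sol: "\<forall>N\<ge>2. xN N 0 = 0 \<and> xN N N = 0 \<and>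
        (\<forall>k\<in>{1..N-1}. xN N (k+1) - 2 * xN N k + xN N (k-1) =
           1 / real N ^ 2 * f (real k / real N) (xN N k) + 1 / real N ^ 2 * v (real k / real N))"
  shows "(\<lambda>N. Max ((\<lambda>k. \<bar>xstar (real k / real N) - xN N k\<bar>) ` {0..N})) \<longlonglongrightarrow> 0"
proof -
  \<comment> \<open>\<open>Cfx\<close>, \<open>Df\<close> and \<open>xstar_unique\<close> only serve the existence and uniqueness of the solutions.\<close>
  obtain y where cx: "continuous_on {0..1} xstar" and cy: "continuous_on {0..1} y"
    and x': "\<And>t. t \<in> {0<..<1} \<Longrightarrow> (xstar has_real_derivative y t) (at t)"
    and y': "\<And>t. t \<in> {0<..<1} \<Longrightarrow> (y has_real_derivative f t (xstar t) + v t) (at t)"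
    using is_H2_solution_classical[OF xstar_sol Cf Dv] by blast
  have x0: "xstar 0 = 0" and x1: "xstar 1 = 0"
    using xstar_sol unfolding is_H2_solution_def H1_0_def by auto
  have ch: "continuous_on {0..1} (\<lambda>t. f t (xstar t) + v t)"
    using continuous_on_superposition[OF Cf cx] Dv by (intro continuous_intros)
  obtain c where c: "c > -1" "\<forall>t\<in>{0..1}. \<forall>x. fx t x \<ge> c" using Dfx by blast
  have onesided: "(p - q) * (f t p - f t q) \<ge> - max 0 (- c) * (p - q)\<^sup>2" if "t \<in> {0..1}" for t p q
  proof (rule deriv_ge_imp_diff_mult_ge[where F' = "fx t"])
    show "(f t has_real_derivative fx t u) (at u)" for u using fx_deriv that by blast
    have "- max 0 (- c) \<le> c" by simp
    then show "- max 0 (- c) \<le> fx t u" for u using c(2) that by (meson order_trans)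
  qed
  show ?thesis
    by (rule finite_difference_convergence[OF cx cy x' y' ch x0 x1 onesided])
      (use c(1) xN_sol in auto)
qed

end
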